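(* Let $\bm{N}=(N_0,\ldots,N_{n-1},-\sum_iN_i)$ and $\bm{M}=(M_0,\ldots,M_{n-1},-\sum_iM_i)$ with all $N_i,M_i\in\mathbb{Z}_{\ge0}$, and suppose $\sum_{i=0}^kN_i\ge\sum_{i=0}^kM_i$ for every $k=0,\ldots,n-1$. Then $K_n(\bm{N})\ge K_n(\bm{M})$.
   Context: $K_n(\bm{N})$ is the number of integer vectors $(f_{ij})_{0\le i<j\le n}\in\mathbb{Z}_{\ge0}^{\binom{n+1}{2}}$ with $\sum_{j>i} f_{ij}-\sum_{k<i} f_{ki}=N_i$ for every $i\in\{0,\ldots,n\}$. *)

theory Defs
  imports Main
begin

text \<open>Flows: integer vectors (f i j) indexed by 0 <= i < j <= n with nonnegative
entries; represented as functions nat => nat => nat that vanish outside the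
index set, so that the set of such vectors is in bijection with
Z_{>=0}^{binom(n+1,2)}.\<close>

definition flow_set :: "nat \<Rightarrow> (nat \<Rightarrow> int) \<Rightarrow> (nat \<Rightarrow> nat \<Rightarrow> nat) set" where
  "flow_set n N = {f. (\<forall>i j. \<not> (i < j \<and> j \<le> n) \<longrightarrow> f i j = 0) \<and>
      (\<forall>i \<in> {0..n}. (\<Sum>j\<in>{i<..n}. int (f i j)) - (\<Sum>k<i. int (f k i)) = N i)}"

definition K :: "nat \<Rightarrow> (nat \<Rightarrow> int) \<Rightarrow> nat" where
  "K n N = card (flow_set n N)"

definition netflow :: "nat \<Rightarrow> (nat \<Rightarrow> nat) \<Rightarrow> nat \<Rightarrow> int" where
  "netflow n N i = (if i < n then int (N i) else - (\<Sum>k<n. int (N k)))"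

end

theory Submission
  imports Defs
begin

text \<open>Write \<open>S\<^sub>N k = N\<^sub>0 + \<dots> + N\<^sub>k\<close>. The vector \<open>netflow n N - netflow n M\<close> is the
excess vector of the path flow sending \<open>S\<^sub>N i - S\<^sub>M i \<ge> 0\<close> units along each edge
\<open>(i, i + 1)\<close>, \<open>i < n\<close>. Adding this fixed flow is an injection from the flows with
excess \<open>netflow n M\<close> into those with excess \<open>netflow n N\<close>. Finiteness of the flow sets,
needed to compare cardinalities, follows from the potential identity
\<open>\<Sum>\<^sub>i i v\<^sub>i = - \<Sum>\<^sub>i\<^sub>,\<^sub>j (j - i) f\<^sub>i\<^sub>j\<close> (only \<open>i < j\<close> contributes),
which bounds every entry of a flow.\<close>

definition excess :: "nat \<Rightarrow> (nat \<Rightarrow> nat \<Rightarrow> nat) \<Rightarrow> nat \<Rightarrow> int" where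
  "excess n f i = (\<Sum>j\<in>{i<..n}. int (f i j)) - (\<Sum>k<i. int (f k i))"

lemma mem_flow_set_iff:
  "f \<in> flow_set n v \<longleftrightarrow>
     (\<forall>i j. \<not> (i < j \<and> j \<le> n) \<longrightarrow> f i j = 0) \<and> (\<forall>i\<le>n. excess n f i = v i)"
  by (auto simp: flow_set_def excess_def)

lemma excess_add: "excess n (\<lambda>i j. f i j + g i j) i = excess n f i + excess n g i"
  by (simp add: excess_def sum.distrib)

lemma flow_potential_identity:
  assumes "f \<in> flow_set n v"
  shows "(\<Sum>i\<le>n. int i * v i) = - (\<Sum>i\<le>n. \<Sum>j\<le>n. (int j - int i) * int (f i j))"
proof -
  define F where "F i j = int (f i j)" for i j
  have zero: "\<And>i j. \<not> (i < j \<and> j \<le> n) \<Longrightarrow> F i j = 0"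
    using assms by (simp add: mem_flow_set_iff F_def)
  have out: "(\<Sum>j\<in>{i<..n}. F i j) = (\<Sum>j\<le>n. F i j)" for i
    by (rule sum.mono_neutral_left) (auto intro: zero)
  have inn: "(\<Sum>k<i. F k i) = (\<Sum>k\<le>n. F k i)" if "i \<le> n" for i
    using that by (intro sum.mono_neutral_left) (auto intro: zero)
  have v: "v i = (\<Sum>j\<le>n. F i j) - (\<Sum>k\<le>n. F k i)" if "i \<le> n" for i
  proof -
    have "v i = excess n f i"
      using assms that by (simp add: mem_flow_set_iff)
    then show ?thesis
      unfolding excess_def F_def[symmetric] out inn[OF that] .
  qed
  have "(\<Sum>i\<le>n. int i * v i) = (\<Sum>i\<le>n. int i * ((\<Sum>j\<le>n. F i j) - (\<Sum>k\<le>n. F k i)))"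
    by (rule sum.cong) (auto simp: v)
  also have "\<dots> = (\<Sum>i\<le>n. \<Sum>j\<le>n. int i * F i j) - (\<Sum>i\<le>n. \<Sum>k\<le>n. int i * F k i)"
    by (simp add: right_diff_distrib sum_distrib_left sum_subtractf)
  also have "(\<Sum>i\<le>n. \<Sum>k\<le>n. int i * F k i) = (\<Sum>k\<le>n. \<Sum>i\<le>n. int i * F k i)"
    by (rule sum.swap)
  finally show ?thesis
    by (simp add: left_diff_distrib sum_subtractf F_def)
qed

lemma flow_entry_le_potential:
  assumes f: "f \<in> flow_set n v"
  shows "int (f a b) \<le> - (\<Sum>i\<le>n. int i * v i)"
proof -
  define T where "T i j = (int j - int i) * int (f i j)" for i j
  have T_nonneg: "0 \<le> T i j" for i j
    using f by (cases "i < j \<and> j \<le> n") (auto simp: T_def mem_flow_set_iff)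
  have potential: "- (\<Sum>i\<le>n. int i * v i) = (\<Sum>i\<le>n. \<Sum>j\<le>n. T i j)"
    by (simp add: flow_potential_identity[OF f] T_def)
  show ?thesis
  proof (cases "a < b \<and> b \<le> n")
    case False
    then have "f a b = 0" using f by (simp add: mem_flow_set_iff)
    then show ?thesis
      unfolding potential by (simp add: sum_nonneg T_nonneg)
  next
    case True
    have "int (f a b) \<le> T a b"
      using True mult_right_mono[of 1 "int b - int a" "int (f a b)"] by (simp add: T_def)
    also have "\<dots> \<le> (\<Sum>j\<le>n. T a j)"
      using True T_nonneg by (intro member_le_sum) auto
    also have "\<dots> \<le> (\<Sum>i\<le>n. \<Sum>j\<le>n. T i j)"
      using True T_nonneg by (intro member_le_sum[where f = "\<lambda>i. \<Sum>j\<le>n. T i j"] sum_nonneg) auto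
    finally show ?thesis
      unfolding potential .
  qed
qed

lemma finite_flow_set: "finite (flow_set n v)"
proof -
  define C where "C = nat (- (\<Sum>i\<le>n. int i * v i))"
  define A where "A = {(i, j). i < j \<and> j \<le> n}"
  have "finite A"
    by (rule finite_subset[of _ "{..n} \<times> {..n}"]) (auto simp: A_def)
  have "flow_set n v \<subseteq> curry ` {h. \<forall>p. (p \<in> A \<longrightarrow> h p \<in> {..C}) \<and> (p \<notin> A \<longrightarrow> h p = 0)}"
  proof
    fix f assume f: "f \<in> flow_set n v"
    have "f i j \<le> C" for i j
      using flow_entry_le_potential[OF f, of i j] by (simp add: C_def)
    then show "f \<in> curry ` {h. \<forall>p. (p \<in> A \<longrightarrow> h p \<in> {..C}) \<and> (p \<notin> A \<longrightarrow> h p = 0)}"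
      using f by (intro rev_image_eqI[of "case_prod f"]) (auto simp: A_def mem_flow_set_iff)
  qed
  then show ?thesis
    by (rule finite_surj[OF finite_set_of_finite_funs[OF \<open>finite A\<close> finite_atMost]])
qed

lemma K_le_translate:
  assumes g: "g \<in> flow_set n d" and w: "\<forall>i\<le>n. w i = v i + d i"
  shows "K n v \<le> K n w"
proof -
  let ?T = "\<lambda>f i j. f i j + g i j"
  have "inj_on ?T (flow_set n v)"
    by (rule inj_onI) (auto simp: fun_eq_iff)
  moreover have "?T ` flow_set n v \<subseteq> flow_set n w"
    using g w by (auto simp: mem_flow_set_iff excess_add)
  ultimately show ?thesis
    unfolding K_def by (intro card_inj_on_le finite_flow_set)
qed

definition chain_flow :: "nat \<Rightarrow> (nat \<Rightarrow> nat) \<Rightarrow> nat \<Rightarrow> nat \<Rightarrow> nat" where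
  "chain_flow n q i j = (if i < n \<and> j = Suc i then q i else 0)"

definition chain_excess :: "nat \<Rightarrow> (nat \<Rightarrow> int) \<Rightarrow> nat \<Rightarrow> int" where
  "chain_excess n q i = (if i < n then q i else 0) - (if 0 < i then q (i - 1) else 0)"

lemma chain_excess_cong:
  "(\<And>k. k < n \<Longrightarrow> q k = r k) \<Longrightarrow> i \<le> n \<Longrightarrow> chain_excess n q i = chain_excess n r i"
  by (simp add: chain_excess_def)

lemma chain_excess_diff:
  "chain_excess n (\<lambda>k. q k - r k) i = chain_excess n q i - chain_excess n r i"
  by (simp add: chain_excess_def)

lemma excess_chain_flow:
  assumes "i \<le> n"
  shows "excess n (chain_flow n q) i = chain_excess n (\<lambda>k. int (q k)) i"
proof -
  have out: "(\<Sum>j\<in>{i<..n}. int (chain_flow n q i j)) = (if i < n then int (q i) else 0)"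
    using assms by (simp add: chain_flow_def if_distrib[of int] sum.delta' cong: if_cong)
  have inn: "(\<Sum>k<i. int (chain_flow n q k i)) = (if 0 < i then int (q (i - 1)) else 0)"
  proof (cases i)
    case (Suc m)
    have "(\<Sum>k<i. int (chain_flow n q k i)) = (\<Sum>k<i. if k = m then int (q m) else 0)"
      using Suc assms by (intro sum.cong) (auto simp: chain_flow_def)
    then show ?thesis using Suc by simp
  qed simp
  show ?thesis
    unfolding excess_def chain_excess_def out inn ..
qed

lemma chain_flow_in_flow_set:
  "chain_flow n q \<in> flow_set n (chain_excess n (\<lambda>k. int (q k)))"
  by (auto simp: mem_flow_set_iff excess_chain_flow chain_flow_def)

lemma netflow_eq_chain_excess:
  assumes "i \<le> n"
  shows "netflow n N i = chain_excess n (\<lambda>k. \<Sum>t\<le>k. int (N t)) i"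
proof (cases i)
  case 0
  then show ?thesis by (simp add: netflow_def chain_excess_def)
next
  case (Suc m)
  then show ?thesis
    using assms by (auto simp: netflow_def chain_excess_def lessThan_Suc_atMost)
qed

theorem proposition2p8:
  fixes n :: nat and N M :: "nat \<Rightarrow> nat"
  assumes "\<forall>k<n. (\<Sum>i\<le>k. M i) \<le> (\<Sum>i\<le>k. N i)"
  shows "K n (netflow n N) \<ge> K n (netflow n M)"
proof -
  define S where "S P k = (\<Sum>t\<le>k. int (P t))" for P :: "nat \<Rightarrow> nat" and k
  define q where "q k = (\<Sum>i\<le>k. N i) - (\<Sum>i\<le>k. M i)" for k
  have q: "int (q k) = S N k - S M k" if "k < n" for k
    using assms that by (simp add: q_def S_def of_nat_diff flip: of_nat_sum)
  have "netflow n N i = netflow n M i + chain_excess n (\<lambda>k. int (q k)) i" if "i \<le> n" for i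
    using that
    by (simp add: netflow_eq_chain_excess chain_excess_cong[OF q] chain_excess_diff
        flip: S_def)
  then show ?thesis
    by (intro K_le_translate[OF chain_flow_in_flow_set[of n q]]) simp
qed

end
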